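(* Suppose $f$ satisfies the separation property. Let $x\in\widetilde X$ with itinerary $\theta$, $t\geqslant 0$, $n\geqslant 1$. If $f^{t+n}(x)\in A_{i_1i_2\dots i_n}$ for some atom $A_{i_1\dots i_n}$, then $\theta_t\theta_{t+1}\dots\theta_{t+n-1}=i_1i_2\dots i_n$.
   Context: Let $(X,d)$ be a compact metric space, $X_1,\dots,X_N$ ($N\geqslant 2$) non-empty pairwise disjoint open subsets with $X=\bigcup_i\overline{X_i}$, $\Delta:=\{x\in\overline{X_i}\cap\overline{X_j}:i\neq j\}$, and $f:X\to X$ a map such that each $f|_{X_i}$ admits a continuous extension $f_i:\overline{X_i}\to X$. Separation property: each $f_i$ injective and $f_i(\overline{X_i})\cap f_j(\overline{X_j})=\emptyset$ for $i\neq j$. $\widetilde X:=\bigcap_{n\geqslant 0}f^{-n}(X\setminus\Delta)$; the itinerary of $x\in\widetilde X$ is $\theta$ with $\theta_t=i$ iff $f^t(x)\in X_i$. For $A\subset X$ let $F_i(A):=\overline{f(A\cap X_i)}$; $A_{i_1\dots i_n}:=F_{i_n}\circ\dots\circ F_{i_1}(X)$ is an atom of generation $n$ if non-empty. *)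

theory Defs
  imports "HOL-Analysis.Analysis"
begin

definition piecewise_setting ::
  "'a::metric_space set \<Rightarrow> nat \<Rightarrow> (nat \<Rightarrow> 'a set) \<Rightarrow> ('a \<Rightarrow> 'a) \<Rightarrow> (nat \<Rightarrow> 'a \<Rightarrow> 'a) \<Rightarrow> bool" where
  "piecewise_setting X N Xs f fs \<longleftrightarrow>
     compact X \<and> N \<ge> 2 \<and>
     (\<forall>i<N. Xs i \<noteq> {} \<and> openin (top_of_set X) (Xs i)) \<and>
     (\<forall>i<N. \<forall>j<N. i \<noteq> j \<longrightarrow> Xs i \<inter> Xs j = {}) \<and>
     X = (\<Union>i<N. closure (Xs i)) \<and>
     f ` X \<subseteq> X \<and>
     (\<forall>i<N. continuous_on (closure (Xs i)) (fs i) \<and> fs i ` closure (Xs i) \<subseteq> X \<and>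
             (\<forall>x\<in>Xs i. fs i x = f x))"

definition separation_property ::
  "nat \<Rightarrow> (nat \<Rightarrow> 'a::metric_space set) \<Rightarrow> (nat \<Rightarrow> 'a \<Rightarrow> 'a) \<Rightarrow> bool" where
  "separation_property N Xs fs \<longleftrightarrow>
     (\<forall>i<N. inj_on (fs i) (closure (Xs i))) \<and>
     (\<forall>i<N. \<forall>j<N. i \<noteq> j \<longrightarrow> fs i ` closure (Xs i) \<inter> fs j ` closure (Xs j) = {})"

definition Delta :: "nat \<Rightarrow> (nat \<Rightarrow> 'a::metric_space set) \<Rightarrow> 'a set" where
  "Delta N Xs = {x. \<exists>i<N. \<exists>j<N. i \<noteq> j \<and> x \<in> closure (Xs i) \<and> x \<in> closure (Xs j)}"

definition Xtilde :: "'a::metric_space set \<Rightarrow> nat \<Rightarrow> (nat \<Rightarrow> 'a set) \<Rightarrow> ('a \<Rightarrow> 'a) \<Rightarrow> 'a set" where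
  "Xtilde X N Xs f = (\<Inter>n. {x \<in> X. (f ^^ n) x \<in> X - Delta N Xs})"

definition is_itinerary ::
  "nat \<Rightarrow> (nat \<Rightarrow> 'a set) \<Rightarrow> ('a \<Rightarrow> 'a) \<Rightarrow> 'a \<Rightarrow> (nat \<Rightarrow> nat) \<Rightarrow> bool" where
  "is_itinerary N Xs f x \<theta> \<longleftrightarrow> (\<forall>t. \<theta> t < N \<and> (\<forall>i<N. \<theta> t = i \<longleftrightarrow> (f ^^ t) x \<in> Xs i))"

definition Fmap :: "(nat \<Rightarrow> 'a::metric_space set) \<Rightarrow> ('a \<Rightarrow> 'a) \<Rightarrow> nat \<Rightarrow> 'a set \<Rightarrow> 'a set" where
  "Fmap Xs f i A = closure (f ` (A \<inter> Xs i))"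

text \<open>A_{i_1 ... i_n} = F_{i_n} o ... o F_{i_1} (X); the word is the list [i_1,...,i_n].\<close>
definition atom_set ::
  "'a::metric_space set \<Rightarrow> (nat \<Rightarrow> 'a set) \<Rightarrow> ('a \<Rightarrow> 'a) \<Rightarrow> nat list \<Rightarrow> 'a set" where
  "atom_set X Xs f w = fold (Fmap Xs f) w X"

definition is_atom ::
  "'a::metric_space set \<Rightarrow> nat \<Rightarrow> (nat \<Rightarrow> 'a set) \<Rightarrow> ('a \<Rightarrow> 'a) \<Rightarrow> nat list \<Rightarrow> bool" where
  "is_atom X N Xs f w \<longleftrightarrow> w \<noteq> [] \<and> set w \<subseteq> {..<N} \<and> atom_set X Xs f w \<noteq> {}"

end

theory Submission
  imports Defs
begin

text \<open>Read the atom from its last letter backwards. If \<open>f\<^sup>m\<^sup>+\<^sup>1 x\<close> lies in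
  \<open>F\<^sub>i A\<close> with \<open>A\<close> closed, then, since \<open>f\<^sub>i\<close> maps the compact set \<open>A \<inter> closure X\<^sub>i\<close> onto a
  closed set, \<open>f\<^sup>m\<^sup>+\<^sup>1 x = f\<^sub>i z\<close> for some \<open>z\<close> there; it is also \<open>f\<^sub>j (f\<^sup>m x)\<close> with
  \<open>j = \<theta>\<^sub>m\<close>. Disjointness of the images gives \<open>\<theta>\<^sub>m = i\<close>, injectivity of \<open>f\<^sub>i\<close> gives
  \<open>f\<^sup>m x = z \<in> A\<close>, and induction on the word length finishes.\<close>

lemma closure_piece_subset:
  assumes "piecewise_setting X N Xs f fs" and "i < N"
  shows "closure (Xs i) \<subseteq> X"
  using assms by (auto simp: piecewise_setting_def)

lemma compact_closure_piece:
  assumes "piecewise_setting X N Xs f fs" and "i < N"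
  shows "compact (closure (Xs i))"
proof -
  have "compact X" using assms(1) unfolding piecewise_setting_def by (rule conjunct1)
  then show ?thesis
    using closure_piece_subset[OF assms] by (metis closed_closure compact_Int_closed inf.absorb2)
qed

lemma closed_atom_set:
  assumes "piecewise_setting X N Xs f fs"
  shows "closed (atom_set X Xs f w)"
proof (cases w rule: rev_exhaust)
  case Nil
  have "compact X" using assms unfolding piecewise_setting_def by (rule conjunct1)
  then show ?thesis using Nil by (simp add: atom_set_def compact_imp_closed)
qed (simp add: atom_set_def Fmap_def)

lemma Fmap_subset_image_closure:
  assumes P: "piecewise_setting X N Xs f fs" and i: "i < N" and A: "closed A"
  shows "Fmap Xs f i A \<subseteq> fs i ` (A \<inter> closure (Xs i))"
proof -
  have "f ` (A \<inter> Xs i) = fs i ` (A \<inter> Xs i)"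
    using P i by (force simp: piecewise_setting_def)
  also have "\<dots> \<subseteq> fs i ` (A \<inter> closure (Xs i))"
    using closure_subset by blast
  finally have sub: "f ` (A \<inter> Xs i) \<subseteq> fs i ` (A \<inter> closure (Xs i))" .
  have "continuous_on (A \<inter> closure (Xs i)) (fs i)"
    using P i continuous_on_subset by (fastforce simp: piecewise_setting_def)
  moreover have "compact (A \<inter> closure (Xs i))"
    using A compact_closure_piece[OF P i] by (rule closed_Int_compact)
  ultimately have "closed (fs i ` (A \<inter> closure (Xs i)))"
    by (simp add: compact_continuous_image compact_imp_closed)
  then show ?thesis
    using sub closure_minimal unfolding Fmap_def by blast
qed

lemma image_mem_Fmap_imp_piece:
  assumes P: "piecewise_setting X N Xs f fs" and S: "separation_property N Xs fs"
    and i: "i < N" and j: "j < N" and A: "closed A"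
    and z: "z \<in> Xs j" and fz: "f z \<in> Fmap Xs f i A"
  shows "j = i" and "z \<in> A"
proof -
  obtain z' where z': "z' \<in> A" "z' \<in> closure (Xs i)" "f z = fs i z'"
    using Fmap_subset_image_closure[OF P i A] fz by blast
  have "f z = fs j z" and zc: "z \<in> closure (Xs j)"
    using P j z closure_subset by (auto simp: piecewise_setting_def)
  then have "fs i z' \<in> fs i ` closure (Xs i) \<inter> fs j ` closure (Xs j)"
    using z' by (metis IntI image_eqI)
  then show "j = i"
    using S i j unfolding separation_property_def by blast
  then have "z' = z"
    using S i z' zc \<open>f z = fs j z\<close> by (auto simp: separation_property_def inj_on_def)
  then show "z \<in> A" using z' by simp
qed

lemma itinerary_reads_atom:
  assumes P: "piecewise_setting X N Xs f fs" and S: "separation_property N Xs fs"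
    and it: "is_itinerary N Xs f x \<theta>"
  shows "set w \<subseteq> {..<N} \<Longrightarrow> (f ^^ (t + length w)) x \<in> atom_set X Xs f w
    \<Longrightarrow> map (\<lambda>k. \<theta> (t + k)) [0..<length w] = w"
proof (induction w rule: rev_induct)
  case (snoc i ws)
  let ?z = "(f ^^ (t + length ws)) x"
  have i: "i < N" using snoc.prems(1) by simp
  have z: "\<theta> (t + length ws) < N" "?z \<in> Xs (\<theta> (t + length ws))"
    using it by (auto simp: is_itinerary_def)
  have "f ?z \<in> Fmap Xs f i (atom_set X Xs f ws)"
    using snoc.prems(2) by (simp add: atom_set_def)
  from image_mem_Fmap_imp_piece[OF P S i z(1) closed_atom_set[OF P] z(2) this]
  have "\<theta> (t + length ws) = i" and "?z \<in> atom_set X Xs f ws" .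
  then show ?case
    using snoc.IH snoc.prems(1) by simp
qed simp

theorem lemma3:
  fixes X :: "'a::metric_space set" and N :: nat and Xs :: "nat \<Rightarrow> 'a set"
    and f :: "'a \<Rightarrow> 'a" and fs :: "nat \<Rightarrow> 'a \<Rightarrow> 'a"
    and x :: 'a and \<theta> :: "nat \<Rightarrow> nat" and t n :: nat and w :: "nat list"
  assumes "piecewise_setting X N Xs f fs"
    and "separation_property N Xs fs"
    and "x \<in> Xtilde X N Xs f"
    and "is_itinerary N Xs f x \<theta>"
    and "n \<ge> 1"
    and "length w = n"
    and "is_atom X N Xs f w"
    and "(f ^^ (t + n)) x \<in> atom_set X Xs f w"
  shows "map (\<lambda>k. \<theta> (t + k)) [0..<n] = w"
  using itinerary_reads_atom[OF assms(1,2,4), of w t] assms(6-8)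
  by (simp add: is_atom_def)

end
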